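(* Let $\nu,a,b\in\mathbb{R}$ with $0<b+\nu<(a+\nu)/4$. Then the function $u_2\mapsto\lambda_2(a,u_2,b)-\lambda_3(a,u_2,b)$ has exactly one zero $u^*$ in the interval $b<u_2<a$, and this zero is simple. Moreover, $\lambda_2(a,u_2,b)-\lambda_3(a,u_2,b)$ is positive for $u^*<u_2<a$ and negative for $b<u_2<u^*$.
   Context: For $-\nu<u_3<u_2<u_1$ define $$I(u_1,u_2,u_3)=\int_{u_3}^{u_2}\frac{\eta+\nu}{\sqrt{(\eta+\nu)(u_1-\eta)(u_2-\eta)(\eta-u_3)}}\,d\eta,$$ and for $i=1,2,3$ $$\lambda_i=u_1+u_2+u_3+2\nu-\frac{I}{\partial I/\partial u_i}.$$ *)

theory Defs
  imports "HOL-Analysis.Analysis"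
begin

text \<open>The integral I(u1,u2,u3) (depending on the parameter nu), as a
  (Henstock--Kurzweil, here improper but absolutely convergent) integral over [u3,u2].\<close>
definition Iint :: "real \<Rightarrow> real \<Rightarrow> real \<Rightarrow> real \<Rightarrow> real" where
  "Iint \<nu> u1 u2 u3 = integral {u3..u2}
     (\<lambda>\<eta>. (\<eta> + \<nu>) / sqrt ((\<eta> + \<nu>) * (u1 - \<eta>) * (u2 - \<eta>) * (\<eta> - u3)))"

definition dI :: "nat \<Rightarrow> real \<Rightarrow> real \<Rightarrow> real \<Rightarrow> real \<Rightarrow> real" where
  "dI i \<nu> u1 u2 u3 =
     (if i = 1 then deriv (\<lambda>x. Iint \<nu> x u2 u3) u1
      else if i = 2 then deriv (\<lambda>x. Iint \<nu> u1 x u3) u2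
      else deriv (\<lambda>x. Iint \<nu> u1 u2 x) u3)"

definition lam :: "nat \<Rightarrow> real \<Rightarrow> real \<Rightarrow> real \<Rightarrow> real \<Rightarrow> real" where
  "lam i \<nu> u1 u2 u3 = u1 + u2 + u3 + 2 * \<nu> - Iint \<nu> u1 u2 u3 / dI i \<nu> u1 u2 u3"

end

theory Submission
  imports Defs
begin

text \<open>
  Shifting by \<open>\<nu>\<close> (\<open>A = a + \<nu>\<close>, \<open>X = u\<^sub>2 + \<nu>\<close>, \<open>B = b + \<nu>\<close>) and substituting
  \<open>\<eta> = b + (u\<^sub>2 - b) sin\<^sup>2 t\<close> turns \<open>I\<close> into \<open>J A X B = \<integral> k(B cos\<^sup>2 t + X sin\<^sup>2 t) dt\<close>
  over \<open>[0, \<pi>/2]\<close>, with \<open>k x = 2\<surd>x / \<surd>(A - x)\<close>. Hence \<open>\<partial>I/\<partial>u\<^sub>2 = J_X = \<integral> sin\<^sup>2 t k'\<close>,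
  \<open>\<partial>I/\<partial>u\<^sub>3 = J_B = \<integral> cos\<^sup>2 t k'\<close>, and \<open>\<lambda>\<^sub>2 - \<lambda>\<^sub>3 = J (J_X - J_B) / (J_X J_B)\<close> has the sign
  of \<open>J_X - J_B\<close>. Integration by parts gives \<open>J_X - J_B = (X - B) Q\<close> with
  \<open>Q = \<integral> 2 sin\<^sup>2 t cos\<^sup>2 t k''\<close>. As \<open>k'' x\<close> has the sign of \<open>4x - A\<close>, \<open>Q < 0\<close> when \<open>4X \<le> A\<close>,
  while \<open>Q > 0\<close> for \<open>X\<close> close to \<open>A\<close>, where \<open>k''\<close> blows up. At a zero of \<open>J_X - J_B\<close> the
  derivative \<open>J_XX - J_BX\<close> is positive, because adding a multiple of the vanishing \<open>Q\<close> makes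
  its integrand nonnegative. A function whose zeros are all upward crossings has exactly one
  zero, with the claimed signs.
\<close>

lemma has_real_derivative_integral_affine_param:
  fixes F F' w \<alpha> \<beta> :: "real \<Rightarrow> real"
  assumes P: "open P" "convex P" "p \<in> P"
    and F: "\<And>x. x \<in> S \<Longrightarrow> (F has_real_derivative F' x) (at x)"
    and cF': "continuous_on S F'"
    and cont: "continuous_on {c..d} w" "continuous_on {c..d} \<alpha>" "continuous_on {c..d} \<beta>"
    and into: "\<And>q t. q \<in> P \<Longrightarrow> t \<in> {c..d} \<Longrightarrow> \<alpha> t + q * \<beta> t \<in> S"
  shows "((\<lambda>q. integral {c..d} (\<lambda>t. w t * F (\<alpha> t + q * \<beta> t))) has_real_derivative
           integral {c..d} (\<lambda>t. w t * \<beta> t * F' (\<alpha> t + p * \<beta> t))) (at p)"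
proof -
  have cF: "continuous_on S F"
    by (rule DERIV_continuous_on) (use F has_field_derivative_at_within in blast)
  have snd_cont: "continuous_on (P \<times> {c..d}) (\<lambda>x. g (snd x))" if "continuous_on {c..d} g" for g
    by (rule continuous_on_compose2[OF that continuous_on_snd]) auto
  have "((\<lambda>q. integral (cbox c d) (\<lambda>t. w t * F (\<alpha> t + q * \<beta> t))) has_real_derivative
           integral (cbox c d) (\<lambda>t. w t * \<beta> t * F' (\<alpha> t + p * \<beta> t))) (at p within P)"
  proof (rule leibniz_rule_field_derivative)
    fix q t assume q: "q \<in> P" and t: "t \<in> cbox c d"
    have "((\<lambda>q. \<alpha> t + q * \<beta> t) has_real_derivative \<beta> t) (at q)"
      by (auto intro!: derivative_eq_intros)
    from DERIV_cmult[OF DERIV_chain2[OF F[OF into] this], of "w t"] q t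
    show "((\<lambda>q. w t * F (\<alpha> t + q * \<beta> t)) has_real_derivative w t * \<beta> t * F' (\<alpha> t + q * \<beta> t))
        (at q within P)"
      by (auto simp: mult_ac intro: has_field_derivative_at_within)
  next
    fix q assume q: "q \<in> P"
    have "continuous_on {c..d} (\<lambda>t. \<alpha> t + q * \<beta> t)"
      using cont by (intro continuous_on_add continuous_on_mult continuous_on_const)
    moreover have "(\<lambda>t. \<alpha> t + q * \<beta> t) ` {c..d} \<subseteq> S"
      using q into by blast
    ultimately have "continuous_on {c..d} (\<lambda>t. F (\<alpha> t + q * \<beta> t))"
      by (rule continuous_on_compose2[OF cF])
    then show "(\<lambda>t. w t * F (\<alpha> t + q * \<beta> t)) integrable_on cbox c d"
      unfolding cbox_interval using cont(1)
      by (intro integrable_continuous_interval continuous_on_mult)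
  next
    have "continuous_on (P \<times> {c..d}) (\<lambda>x. \<alpha> (snd x) + fst x * \<beta> (snd x))"
      using cont
      by (intro continuous_on_add continuous_on_mult continuous_on_fst continuous_on_id snd_cont)
    moreover have "(\<lambda>x. \<alpha> (snd x) + fst x * \<beta> (snd x)) ` (P \<times> {c..d}) \<subseteq> S"
      using into by auto
    ultimately have "continuous_on (P \<times> {c..d}) (\<lambda>x. F' (\<alpha> (snd x) + fst x * \<beta> (snd x)))"
      by (rule continuous_on_compose2[OF cF'])
    then show "continuous_on (P \<times> cbox c d) (\<lambda>(q, t). w t * \<beta> t * F' (\<alpha> t + q * \<beta> t))"
      unfolding cbox_interval case_prod_beta
      using cont by (intro continuous_on_mult snd_cont)
  qed (use P in auto)
  then show ?thesis
    unfolding at_within_open[OF P(3,1)] cbox_interval .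
qed

lemma integral_pos_if_continuous_nonneg:
  fixes f :: "real \<Rightarrow> real"
  assumes "continuous_on {c..d} f" "\<And>x. x \<in> {c..d} \<Longrightarrow> 0 \<le> f x"
    and "t \<in> {c..d}" "0 < f t" "c < d"
  shows "0 < integral {c..d} f"
proof -
  have f: "f integrable_on {c..d}"
    using assms(1) by (rule integrable_continuous_interval)
  have "integral {c..d} f \<noteq> 0"
  proof
    assume "integral {c..d} f = 0"
    with f have "(f has_integral 0) (cbox c d)"
      by (metis cbox_interval integrable_integral)
    then have "f t = 0"
      using has_integral_0_cbox_imp_0[of c d f t] assms by auto
    with \<open>0 < f t\<close> show False by simp
  qed
  moreover have "0 \<le> integral {c..d} f"
    using f assms(2) by (rule integral_nonneg)
  ultimately show ?thesis by simp
qed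

lemma integral_ge_if_bounded_below_on_window:
  fixes f :: "real \<Rightarrow> real"
  assumes f: "f integrable_on {c..d}" and sub: "c \<le> s" "s \<le> s'" "s' \<le> d"
    and below: "\<And>t. t \<in> {c..d} \<Longrightarrow> - m \<le> f t" "0 \<le> m"
    and window: "\<And>t. t \<in> {s..s'} \<Longrightarrow> h \<le> f t"
  shows "(s' - s) * h - (d - c) * m \<le> integral {c..d} f"
proof -
  have lower: "(y - x) * k \<le> integral {x..y} f"
    if "c \<le> x" "x \<le> y" "y \<le> d" "\<And>t. t \<in> {x..y} \<Longrightarrow> k \<le> f t" for x y k
    using integral_le[of "\<lambda>t. k" "{x..y}" f] integrable_on_subinterval[OF f, of x y] that
    by (simp add: integrable_const_ivl)
  have "integral {c..d} f = integral {c..s} f + integral {s..s'} f + integral {s'..d} f"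
    using sub f
    by (simp add: Henstock_Kurzweil_Integration.integral_combine integrable_on_subinterval)
  moreover have "(s - c) * - m \<le> integral {c..s} f" "(d - s') * - m \<le> integral {s'..d} f"
    using sub below(1) by (intro lower; simp)+
  moreover have "(s' - s) * h \<le> integral {s..s'} f"
    using sub window by (intro lower) auto
  moreover have "0 \<le> (s' - s) * m"
    using sub below(2) by simp
  moreover have "(s' - s) * h - (d - c) * m
      = (s - c) * - m + (s' - s) * h + (d - s') * - m - (s' - s) * m"
    by (simp add: algebra_simps)
  ultimately show ?thesis
    by linarith
qed

lemma abs_cos_diff_le: "\<bar>cos x - cos y\<bar> \<le> \<bar>x - y\<bar>" for x y :: real
proof -
  have "\<bar>cos x - cos y\<bar> = 2 * \<bar>sin ((x + y) / 2)\<bar> * \<bar>sin ((y - x) / 2)\<bar>"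
    unfolding cos_diff_cos by (simp add: abs_mult)
  also have "\<dots> \<le> 2 * 1 * \<bar>(y - x) / 2\<bar>"
    by (intro mult_mono abs_sin_x_le_abs_x abs_sin_le_one) auto
  finally show ?thesis by simp
qed

lemma DERIV_mult_at_zero:
  fixes f g :: "real \<Rightarrow> real"
  assumes "(g has_real_derivative D) (at z)" "g z = 0" "isCont f z"
  shows "((\<lambda>x. f x * g x) has_real_derivative f z * D) (at z)"
proof -
  have "((\<lambda>x. f x * ((g x - g z) / (x - z))) \<longlongrightarrow> f z * D) (at z)"
    using assms(1,3) by (intro tendsto_mult) (auto simp: isCont_def has_field_derivative_iff)
  then show ?thesis
    using assms(2) by (simp add: has_field_derivative_iff)
qed

lemma nonneg_right_of_upcrossing_zero:
  fixes f f' :: "real \<Rightarrow> real"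
  assumes der: "\<And>x. lo < x \<Longrightarrow> x < hi \<Longrightarrow> (f has_real_derivative f' x) (at x)"
    and up: "\<And>x. lo < x \<Longrightarrow> x < hi \<Longrightarrow> f x = 0 \<Longrightarrow> 0 < f' x"
    and z: "lo < z" "f z = 0" and y: "z < y" "y < hi"
  shows "0 \<le> f y"
proof (rule ccontr)
  assume "\<not> 0 \<le> f y"
  then have fy: "f y < 0" by simp
  have cont: "continuous_on {x..y} f" if "z \<le> x" for x
    using that z y by (intro continuous_at_imp_continuous_on ballI DERIV_isCont[OF der]) auto
  txt \<open>The last zero of \<open>f\<close> in \<open>[z, y]\<close> is followed by positive values, hence by another zero.\<close>
  define Z where "Z = {x \<in> {z..y}. f x = 0}"
  have "closed Z"
    unfolding Z_def using cont by (intro continuous_closed_preimage_constant) auto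
  moreover have "z \<in> Z" and bdd: "bdd_above Z"
    unfolding Z_def using z y by (auto intro: bdd_aboveI[of _ y])
  ultimately have "Sup Z \<in> Z"
    by (intro closed_contains_Sup) auto
  have last: "x \<le> Sup Z" if "x \<in> Z" for x
    using that bdd by (rule cSup_upper)
  define m where "m = Sup Z"
  have "z \<le> m" "m \<le> y" "f m = 0"
    using \<open>Sup Z \<in> Z\<close> unfolding m_def Z_def by auto
  then have "m < y"
    using fy by (cases "m = y") auto
  have "lo < m" "m < hi"
    using z y \<open>z \<le> m\<close> \<open>m < y\<close> by auto
  with \<open>f m = 0\<close> have "0 < f' m"
    by (intro up)
  then obtain d where "0 < d" and inc: "\<And>h. 0 < h \<Longrightarrow> h < d \<Longrightarrow> f m < f (m + h)"
    using DERIV_pos_inc_right[OF der[OF \<open>lo < m\<close> \<open>m < hi\<close>]] by blast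
  define h where "h = min d (y - m) / 2"
  have "0 < h" "h < d" "h < y - m"
    unfolding h_def using \<open>0 < d\<close> \<open>m < y\<close> by auto
  define x1 where "x1 = m + h"
  have x1: "m < x1" "x1 < y" "0 < f x1"
    unfolding x1_def using \<open>0 < h\<close> \<open>h < y - m\<close> inc[OF \<open>0 < h\<close> \<open>h < d\<close>] \<open>f m = 0\<close> by auto
  have "\<exists>x2. x1 \<le> x2 \<and> x2 \<le> y \<and> f x2 = 0"
    using fy x1 \<open>z \<le> m\<close> by (intro IVT2' cont) auto
  then obtain x2 where "x1 \<le> x2" "x2 \<le> y" "f x2 = 0"
    by blast
  then have "x2 \<in> Z"
    unfolding Z_def using x1 \<open>z \<le> m\<close> by auto
  from last[OF this] x1 \<open>x1 \<le> x2\<close> show False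
    unfolding m_def by linarith
qed

lemma pos_right_of_upcrossing_zero:
  fixes f f' :: "real \<Rightarrow> real"
  assumes der: "\<And>x. lo < x \<Longrightarrow> x < hi \<Longrightarrow> (f has_real_derivative f' x) (at x)"
    and up: "\<And>x. lo < x \<Longrightarrow> x < hi \<Longrightarrow> f x = 0 \<Longrightarrow> 0 < f' x"
    and z: "lo < z" "f z = 0" and y: "z < y" "y < hi"
  shows "0 < f y"
proof (rule ccontr)
  assume "\<not> 0 < f y"
  with nonneg_right_of_upcrossing_zero[OF der up z y] have "f y = 0"
    by linarith
  with z y have "0 < f' y"
    by (intro up) auto
  moreover have "lo < y"
    using z y by simp
  ultimately obtain d where "0 < d" and inc: "\<And>h. 0 < h \<Longrightarrow> h < d \<Longrightarrow> f (y - h) < f y"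
    using DERIV_pos_inc_left[OF der[OF _ \<open>y < hi\<close>]] by blast
  define h where "h = min d (y - z) / 2"
  have "0 < h" "h < d" "h < y - z"
    unfolding h_def using \<open>0 < d\<close> y by auto
  have "f (y - h) < 0"
    using inc[OF \<open>0 < h\<close> \<open>h < d\<close>] \<open>f y = 0\<close> by simp
  moreover have "0 \<le> f (y - h)"
    using \<open>0 < h\<close> \<open>h < y - z\<close> y by (intro nonneg_right_of_upcrossing_zero[OF der up z]) auto
  ultimately show False
    by linarith
qed

lemma neg_left_of_upcrossing_zero:
  fixes f f' :: "real \<Rightarrow> real"
  assumes der: "\<And>x. lo < x \<Longrightarrow> x < hi \<Longrightarrow> (f has_real_derivative f' x) (at x)"
    and up: "\<And>x. lo < x \<Longrightarrow> x < hi \<Longrightarrow> f x = 0 \<Longrightarrow> 0 < f' x"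
    and z: "z < hi" "f z = 0" and y: "lo < y" "y < z"
  shows "f y < 0"
proof -
  define g where "g x = - f (- x)" for x
  have "(g has_real_derivative f' (- x)) (at x)" if "- hi < x" "x < - lo" for x
  proof -
    have "((\<lambda>x. f (- x)) has_real_derivative f' (- x) * - 1) (at x)"
      using that by (intro DERIV_chain2[OF der] derivative_eq_intros) auto
    then show ?thesis
      unfolding g_def using DERIV_minus by fastforce
  qed
  moreover have "0 < f' (- x)" if "- hi < x" "x < - lo" "g x = 0" for x
    using that unfolding g_def by (intro up) auto
  moreover have "- hi < - z" "g (- z) = 0" "- z < - y" "- y < - lo"
    using z y unfolding g_def by auto
  ultimately have "0 < g (- y)"
    by (rule pos_right_of_upcrossing_zero)
  then show ?thesis
    unfolding g_def by simp
qed

lemma upcrossing_zero_unique: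
  fixes f f' :: "real \<Rightarrow> real"
  assumes der: "\<And>x. lo < x \<Longrightarrow> x < hi \<Longrightarrow> (f has_real_derivative f' x) (at x)"
    and up: "\<And>x. lo < x \<Longrightarrow> x < hi \<Longrightarrow> f x = 0 \<Longrightarrow> 0 < f' x"
    and sign_change: "lo < x0" "x0 \<le> x1" "x1 < hi" "f x0 < 0" "0 < f x1"
  obtains z where "lo < z" "z < hi" "f z = 0"
    "\<And>y. z < y \<Longrightarrow> y < hi \<Longrightarrow> 0 < f y" "\<And>y. lo < y \<Longrightarrow> y < z \<Longrightarrow> f y < 0"
proof -
  have "continuous_on {x0..x1} f"
    using sign_change by (intro continuous_at_imp_continuous_on ballI DERIV_isCont[OF der]) auto
  then obtain z where "x0 \<le> z" "z \<le> x1" "f z = 0"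
    using IVT'[of f x0 0 x1] sign_change by auto
  have "lo < z" "z < hi"
    using sign_change \<open>x0 \<le> z\<close> \<open>z \<le> x1\<close> by linarith+
  show ?thesis
  proof (rule that)
    show "0 < f y" if "z < y" "y < hi" for y
      using pos_right_of_upcrossing_zero[OF der up \<open>lo < z\<close> \<open>f z = 0\<close> that] .
    show "f y < 0" if "lo < y" "y < z" for y
      using neg_left_of_upcrossing_zero[OF der up \<open>z < hi\<close> \<open>f z = 0\<close> that] .
  qed fact+
qed

lemma sign_change_of_positive_multiple:
  fixes L c f :: "real \<Rightarrow> real"
  assumes L: "\<And>u. lo < u \<Longrightarrow> u < hi \<Longrightarrow> L u = c u * f u"
    and c: "\<And>u. lo < u \<Longrightarrow> u < hi \<Longrightarrow> 0 < c u" "isCont c z"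
    and z: "lo < z" "z < hi" "f z = 0" "(f has_real_derivative D) (at z)" "D \<noteq> 0"
    and right: "\<And>u. z < u \<Longrightarrow> u < hi \<Longrightarrow> 0 < f u"
    and left: "\<And>u. lo < u \<Longrightarrow> u < z \<Longrightarrow> f u < 0"
  shows "\<exists>z. lo < z \<and> z < hi \<and> L z = 0
     \<and> (\<forall>u. lo < u \<and> u < hi \<and> L u = 0 \<longrightarrow> u = z)
     \<and> (\<exists>D. (L has_real_derivative D) (at z) \<and> D \<noteq> 0)
     \<and> (\<forall>u. z < u \<and> u < hi \<longrightarrow> L u > 0)
     \<and> (\<forall>u. lo < u \<and> u < z \<longrightarrow> L u < 0)"
proof -
  have pos: "0 < L u" if "z < u" "u < hi" for u
    using L[of u] c(1)[of u] right[of u] z that by auto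
  have neg: "L u < 0" if "lo < u" "u < z" for u
    using L[of u] c(1)[of u] left[of u] z that by (auto simp: mult_pos_neg)
  have "((\<lambda>u. c u * f u) has_real_derivative c z * D) (at z)"
    using z c(2) by (intro DERIV_mult_at_zero)
  then have deriv: "(L has_real_derivative c z * D) (at z)"
    by (rule has_field_derivative_transform_within_open[where S = "{lo<..<hi}"]) (use L z in auto)
  have "c z * D \<noteq> 0"
    using c(1)[of z] z by auto
  have unique: "u = z" if "lo < u" "u < hi" "L u = 0" for u
    using pos[of u] neg[of u] that by (cases u z rule: linorder_cases) auto
  show ?thesis
  proof (rule exI[of _ z], intro conjI)
    show "L z = 0"
      using L z by simp
    show "\<exists>D. (L has_real_derivative D) (at z) \<and> D \<noteq> 0"
      using deriv \<open>c z * D \<noteq> 0\<close> by blast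
  qed (use z pos neg unique in blast)+
qed

section \<open>The integral in trigonometric coordinates\<close>

definition kernel :: "real \<Rightarrow> real \<Rightarrow> real" where
  "kernel A x = 2 * sqrt x / sqrt (A - x)"

definition kernel' :: "real \<Rightarrow> real \<Rightarrow> real" where
  "kernel' A x = A / (sqrt x * (A - x) * sqrt (A - x))"

definition kernel'' :: "real \<Rightarrow> real \<Rightarrow> real" where
  "kernel'' A x = A * (4 * x - A) / (2 * x * sqrt x * (A - x)\<^sup>2 * sqrt (A - x))"

lemma has_real_derivative_kernel:
  assumes "0 < x" "x < A"
  shows "(kernel A has_real_derivative kernel' A x) (at x)"
proof -
  define p q where "p = sqrt x" and "q = sqrt (A - x)"
  have pq: "0 < p" "0 < q" "x = p\<^sup>2" "A = p\<^sup>2 + q\<^sup>2"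
    using assms unfolding p_def q_def by auto
  show ?thesis
    unfolding kernel_def[abs_def]
    apply (rule derivative_eq_intros refl | use assms in force)+
    unfolding kernel'_def p_def[symmetric] q_def[symmetric]
    using pq by (simp add: field_simps) (simp add: algebra_simps eval_nat_numeral)
qed

lemma has_real_derivative_kernel':
  assumes "0 < x" "x < A"
  shows "(kernel' A has_real_derivative kernel'' A x) (at x)"
proof -
  define p q where "p = sqrt x" and "q = sqrt (A - x)"
  have pq: "0 < p" "0 < q" "x = p\<^sup>2" "A = p\<^sup>2 + q\<^sup>2"
    using assms unfolding p_def q_def by auto
  show ?thesis
    unfolding kernel'_def[abs_def]
    apply (rule derivative_eq_intros refl | use assms in force)+
    unfolding kernel''_def p_def[symmetric] q_def[symmetric]
    using pq by (simp add: field_simps) (simp add: algebra_simps eval_nat_numeral)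
qed

lemma kernel'_pos: "0 < x \<Longrightarrow> x < A \<Longrightarrow> 0 < kernel' A x"
  unfolding kernel'_def by simp

lemma kernel''_eq: "kernel'' A x = (4 * x - A) * (kernel' A x / (2 * x * (A - x)))"
  unfolding kernel''_def kernel'_def by (simp add: power2_eq_square mult_ac)

lemma kernel''_factor_pos: "0 < x \<Longrightarrow> x < A \<Longrightarrow> 0 < kernel' A x / (2 * x * (A - x))"
  using kernel'_pos[of x A] by simp

lemma zero_less_kernel''_iff: "0 < x \<Longrightarrow> x < A \<Longrightarrow> 0 < kernel'' A x \<longleftrightarrow> A < 4 * x"
  using kernel''_factor_pos[of x A]
  by (simp add: kernel''_eq zero_less_mult_iff del: times_divide_eq_right)

lemma kernel''_less_zero_iff: "0 < x \<Longrightarrow> x < A \<Longrightarrow> kernel'' A x < 0 \<longleftrightarrow> 4 * x < A"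
  using kernel''_factor_pos[of x A]
  by (simp add: kernel''_eq mult_less_0_iff del: times_divide_eq_right)

lemma continuous_on_kernel: "continuous_on {0<..<A} (kernel A)"
  by (rule DERIV_continuous_on, rule has_field_derivative_at_within,
      rule has_real_derivative_kernel) auto

lemma continuous_on_kernel': "continuous_on {0<..<A} (kernel' A)"
  by (rule DERIV_continuous_on, rule has_field_derivative_at_within,
      rule has_real_derivative_kernel') auto

lemma continuous_on_kernel'': "continuous_on {0<..<A} (kernel'' A)"
  unfolding kernel''_def by (intro continuous_intros) auto

definition mix :: "real \<Rightarrow> real \<Rightarrow> real \<Rightarrow> real" where
  "mix X B t = B * (cos t)\<^sup>2 + X * (sin t)\<^sup>2"

lemma mix_eq: "mix X B t = B + (X - B) * (sin t)\<^sup>2"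
  unfolding mix_def cos_squared_eq by (simp add: algebra_simps)

lemma mix_between:
  fixes X B t :: real
  shows "min B X \<le> mix X B t" "mix X B t \<le> max B X"
proof -
  define s where "s = (sin t)\<^sup>2"
  have s: "0 \<le> s" "s \<le> 1"
    unfolding s_def by (simp_all add: abs_square_le_1)
  have mix: "mix X B t = B * (1 - s) + X * s"
    unfolding mix_eq s_def by (simp add: algebra_simps)
  have "min B X * (1 - s) + min B X * s \<le> B * (1 - s) + X * s"
    using s by (intro add_mono mult_right_mono) auto
  moreover have "B * (1 - s) + X * s \<le> max B X * (1 - s) + max B X * s"
    using s by (intro add_mono mult_right_mono) auto
  ultimately show "min B X \<le> mix X B t" "mix X B t \<le> max B X"
    unfolding mix by (simp_all add: algebra_simps)
qed

lemma mix_in_interval: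
  "0 < B \<Longrightarrow> B < A \<Longrightarrow> 0 < X \<Longrightarrow> X < A \<Longrightarrow> mix X B t \<in> {0<..<A}"
  using mix_between[where X=X and B=B and t=t] by (auto simp: min_def max_def split: if_splits)

lemma continuous_on_comp_mix:
  assumes F: "continuous_on {0<..<A} F" and "0 < B" "B < A" "0 < X" "X < A"
  shows "continuous_on {0..pi/2} (\<lambda>t. F (mix X B t))"
proof (rule continuous_on_compose2[OF F])
  show "continuous_on {0..pi/2} (mix X B)"
    unfolding mix_def by (intro continuous_intros)
  show "mix X B ` {0..pi/2} \<subseteq> {0<..<A}"
    using mix_in_interval assms(2-) by blast
qed

lemma has_real_derivative_integral_mix_X:
  fixes F F' w :: "real \<Rightarrow> real"
  assumes F: "\<And>x. 0 < x \<Longrightarrow> x < A \<Longrightarrow> (F has_real_derivative F' x) (at x)"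
    and cF': "continuous_on {0<..<A} F'" and w: "continuous_on {0..pi/2} w"
    and BX: "0 < B" "B < A" "0 < X" "X < A"
  shows "((\<lambda>X. integral {0..pi/2} (\<lambda>t. w t * F (mix X B t))) has_real_derivative
           integral {0..pi/2} (\<lambda>t. w t * (sin t)\<^sup>2 * F' (mix X B t))) (at X)"
proof -
  have "((\<lambda>q. integral {0..pi/2} (\<lambda>t. w t * F (B * (cos t)\<^sup>2 + q * (sin t)\<^sup>2))) has_real_derivative
      integral {0..pi/2} (\<lambda>t. w t * (sin t)\<^sup>2 * F' (B * (cos t)\<^sup>2 + X * (sin t)\<^sup>2))) (at X)"
  proof (rule has_real_derivative_integral_affine_param[where S = "{0<..<A}"])
    show "B * (cos t)\<^sup>2 + q * (sin t)\<^sup>2 \<in> {0<..<A}" if "q \<in> {0<..<A}" for q t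
      using mix_in_interval[of B A q t] that BX unfolding mix_def by auto
  qed (use F BX in \<open>auto intro!: continuous_intros cF' w\<close>)
  then show ?thesis
    unfolding mix_def .
qed

lemma has_real_derivative_integral_mix_B:
  fixes F F' w :: "real \<Rightarrow> real"
  assumes F: "\<And>x. 0 < x \<Longrightarrow> x < A \<Longrightarrow> (F has_real_derivative F' x) (at x)"
    and cF': "continuous_on {0<..<A} F'" and w: "continuous_on {0..pi/2} w"
    and BX: "0 < B" "B < A" "0 < X" "X < A"
  shows "((\<lambda>B. integral {0..pi/2} (\<lambda>t. w t * F (mix X B t))) has_real_derivative
           integral {0..pi/2} (\<lambda>t. w t * (cos t)\<^sup>2 * F' (mix X B t))) (at B)"
proof -
  have "((\<lambda>q. integral {0..pi/2} (\<lambda>t. w t * F (X * (sin t)\<^sup>2 + q * (cos t)\<^sup>2))) has_real_derivative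
      integral {0..pi/2} (\<lambda>t. w t * (cos t)\<^sup>2 * F' (X * (sin t)\<^sup>2 + B * (cos t)\<^sup>2))) (at B)"
  proof (rule has_real_derivative_integral_affine_param[where S = "{0<..<A}"])
    show "X * (sin t)\<^sup>2 + q * (cos t)\<^sup>2 \<in> {0<..<A}" if "q \<in> {0<..<A}" for q t
      using mix_in_interval[of q A X t] that BX unfolding mix_def by (auto simp: add.commute)
  qed (use F BX in \<open>auto intro!: continuous_intros cF' w\<close>)
  then show ?thesis
    unfolding mix_def by (simp only: add.commute)
qed

definition J :: "real \<Rightarrow> real \<Rightarrow> real \<Rightarrow> real" where
  "J A X B = integral {0..pi/2} (\<lambda>t. kernel A (mix X B t))"

definition J_X :: "real \<Rightarrow> real \<Rightarrow> real \<Rightarrow> real" where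
  "J_X A X B = integral {0..pi/2} (\<lambda>t. (sin t)\<^sup>2 * kernel' A (mix X B t))"

definition J_B :: "real \<Rightarrow> real \<Rightarrow> real \<Rightarrow> real" where
  "J_B A X B = integral {0..pi/2} (\<lambda>t. (cos t)\<^sup>2 * kernel' A (mix X B t))"

definition J_XX :: "real \<Rightarrow> real \<Rightarrow> real \<Rightarrow> real" where
  "J_XX A X B = integral {0..pi/2} (\<lambda>t. (sin t)\<^sup>2 * (sin t)\<^sup>2 * kernel'' A (mix X B t))"

definition J_BX :: "real \<Rightarrow> real \<Rightarrow> real \<Rightarrow> real" where
  "J_BX A X B = integral {0..pi/2} (\<lambda>t. (cos t)\<^sup>2 * (sin t)\<^sup>2 * kernel'' A (mix X B t))"

definition Q :: "real \<Rightarrow> real \<Rightarrow> real \<Rightarrow> real" where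
  "Q A X B = integral {0..pi/2} (\<lambda>t. 2 * (sin t)\<^sup>2 * (cos t)\<^sup>2 * kernel'' A (mix X B t))"

context
  fixes A X B :: real
  assumes BX: "0 < B" "B < A" "0 < X" "X < A"
begin

lemma has_real_derivative_J_X: "((\<lambda>X. J A X B) has_real_derivative J_X A X B) (at X)"
  using has_real_derivative_integral_mix_X[OF has_real_derivative_kernel continuous_on_kernel'
      continuous_on_const BX, of 1]
  unfolding J_def J_X_def by simp

lemma has_real_derivative_J_B: "((\<lambda>B. J A X B) has_real_derivative J_B A X B) (at B)"
  using has_real_derivative_integral_mix_B[OF has_real_derivative_kernel continuous_on_kernel'
      continuous_on_const BX, of 1]
  unfolding J_def J_B_def by simp

lemma has_real_derivative_J_X_X: "((\<lambda>X. J_X A X B) has_real_derivative J_XX A X B) (at X)"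
  using has_real_derivative_integral_mix_X[OF has_real_derivative_kernel' continuous_on_kernel''
      _ BX, of "\<lambda>t. (sin t)\<^sup>2"]
  unfolding J_X_def J_XX_def by (simp add: continuous_intros)

lemma has_real_derivative_J_B_X: "((\<lambda>X. J_B A X B) has_real_derivative J_BX A X B) (at X)"
  using has_real_derivative_integral_mix_X[OF has_real_derivative_kernel' continuous_on_kernel''
      _ BX, of "\<lambda>t. (cos t)\<^sup>2"]
  unfolding J_B_def J_BX_def by (simp add: continuous_intros)

lemma integrable_weighted_mix:
  fixes F w :: "real \<Rightarrow> real"
  assumes "continuous_on {0<..<A} F" "continuous_on {0..pi/2} w"
  shows "(\<lambda>t. w t * F (mix X B t)) integrable_on {0..pi/2}"
  using assms(2) continuous_on_comp_mix[OF assms(1) BX]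
  by (rule continuous_on_mult[THEN integrable_continuous_interval])

lemma integral_weighted_kernel'_pos:
  fixes w :: "real \<Rightarrow> real"
  assumes "continuous_on {0..pi/2} w" "\<And>t. 0 \<le> w t" "0 < w (pi/4)"
  shows "0 < integral {0..pi/2} (\<lambda>t. w t * kernel' A (mix X B t))"
proof (rule integral_pos_if_continuous_nonneg)
  show "continuous_on {0..pi/2} (\<lambda>t. w t * kernel' A (mix X B t))"
    using assms(1) continuous_on_comp_mix[OF continuous_on_kernel' BX] by (rule continuous_on_mult)
  show "0 \<le> w t * kernel' A (mix X B t)" for t
    using assms(2) kernel'_pos mix_in_interval[OF BX] by (simp add: less_imp_le)
  show "0 < w (pi/4) * kernel' A (mix X B (pi/4))"
    using assms(3) kernel'_pos mix_in_interval[OF BX] by simp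
qed auto

lemma J_X_pos: "0 < J_X A X B"
  unfolding J_X_def
  by (rule integral_weighted_kernel'_pos) (auto intro!: continuous_intros simp: sin_45)

lemma J_B_pos: "0 < J_B A X B"
  unfolding J_B_def
  by (rule integral_weighted_kernel'_pos) (auto intro!: continuous_intros simp: cos_45)

lemma J_pos: "0 < J A X B"
  unfolding J_def
proof (rule integral_pos_if_continuous_nonneg)
  show "continuous_on {0..pi/2} (\<lambda>t. kernel A (mix X B t))"
    by (rule continuous_on_comp_mix[OF continuous_on_kernel BX])
  show "0 \<le> kernel A (mix X B t)" for t
    using mix_in_interval[OF BX, of t] unfolding kernel_def by auto
  show "0 < kernel A (mix X B (pi/4))"
    using mix_in_interval[OF BX, of "pi/4"] unfolding kernel_def by auto
qed auto

section \<open>The sign of \<open>J_X - J_B\<close>\<close>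

lemma J_X_minus_J_B: "J_X A X B - J_B A X B = (X - B) * Q A X B"
proof -
  define K where "K t = kernel' A (mix X B t)" for t
  define K' where "K' t = kernel'' A (mix X B t) * ((X - B) * (2 * sin t * cos t))" for t
  have K: "(K has_real_derivative K' t) (at t)" for t
  proof -
    have "(mix X B has_real_derivative (X - B) * (2 * sin t * cos t)) (at t)"
      unfolding mix_eq[abs_def] by (auto intro!: derivative_eq_intros simp: power2_eq_square)
    then show ?thesis
      unfolding K_def K'_def using mix_in_interval[OF BX, of t]
      by (auto intro: DERIV_chain2[OF has_real_derivative_kernel'])
  qed
  txt \<open>Integration by parts against \<open>(sin t cos t)' = cos\<^sup>2 t - sin\<^sup>2 t\<close>; the boundary terms
    vanish.\<close>
  define \<Phi> where "\<Phi> t = sin t * cos t * K t" for t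
  define \<Phi>' where "\<Phi>' t = ((cos t)\<^sup>2 - (sin t)\<^sup>2) * K t + sin t * cos t * K' t" for t
  have "(\<Phi>' has_integral \<Phi> (pi/2) - \<Phi> 0) {0..pi/2}"
  proof (rule fundamental_theorem_of_calculus)
    fix t :: real
    have "((\<lambda>t. sin t * cos t) has_real_derivative (cos t)\<^sup>2 - (sin t)\<^sup>2) (at t)"
      by (auto intro!: derivative_eq_intros simp: power2_eq_square)
    from DERIV_mult[OF this K] have "(\<Phi> has_real_derivative \<Phi>' t) (at t)"
      unfolding \<Phi>_def[abs_def] \<Phi>'_def by (simp only: mult.commute[of "K' t"])
    then show "(\<Phi> has_vector_derivative \<Phi>' t) (at t within {0..pi/2})"
      by (simp add: has_real_derivative_iff_has_vector_derivative[symmetric]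
          has_field_derivative_at_within)
  qed simp
  then have "(\<Phi>' has_integral 0) {0..pi/2}"
    unfolding \<Phi>_def by simp
  moreover have "((\<lambda>t. (sin t)\<^sup>2 * K t) has_integral J_X A X B) {0..pi/2}"
    "((\<lambda>t. (cos t)\<^sup>2 * K t) has_integral J_B A X B) {0..pi/2}"
    unfolding J_X_def J_B_def K_def
    by (auto intro!: integrable_integral integrable_weighted_mix continuous_on_kernel'
        continuous_intros)
  ultimately have "((\<lambda>t. (sin t)\<^sup>2 * K t - (cos t)\<^sup>2 * K t + \<Phi>' t) has_integral
      J_X A X B - J_B A X B + 0) {0..pi/2}"
    by (intro has_integral_add has_integral_diff)
  moreover have "(sin t)\<^sup>2 * K t - (cos t)\<^sup>2 * K t + \<Phi>' t
      = (X - B) * (2 * (sin t)\<^sup>2 * (cos t)\<^sup>2 * kernel'' A (mix X B t))" for t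
    unfolding \<Phi>'_def K'_def by (simp add: algebra_simps power2_eq_square)
  ultimately have "((\<lambda>t. (X - B) * (2 * (sin t)\<^sup>2 * (cos t)\<^sup>2 * kernel'' A (mix X B t)))
      has_integral J_X A X B - J_B A X B) {0..pi/2}"
    by simp
  then have "J_X A X B - J_B A X B
      = integral {0..pi/2} (\<lambda>t. (X - B) * (2 * (sin t)\<^sup>2 * (cos t)\<^sup>2 * kernel'' A (mix X B t)))"
    by (rule integral_unique[symmetric])
  then show ?thesis
    unfolding Q_def by simp
qed

lemma Q_neg:
  assumes "B < X" "4 * X \<le> A"
  shows "Q A X B < 0"
proof -
  have "0 < integral {0..pi/2} (\<lambda>t. - (2 * (sin t)\<^sup>2 * (cos t)\<^sup>2) * kernel'' A (mix X B t))"
  proof (rule integral_pos_if_continuous_nonneg)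
    show "continuous_on {0..pi/2} (\<lambda>t. - (2 * (sin t)\<^sup>2 * (cos t)\<^sup>2) * kernel'' A (mix X B t))"
      using continuous_on_comp_mix[OF continuous_on_kernel'' BX]
      by (intro continuous_on_mult continuous_intros)
    show "0 \<le> - (2 * (sin t)\<^sup>2 * (cos t)\<^sup>2) * kernel'' A (mix X B t)" for t
    proof -
      have "mix X B t \<le> X"
        using mix_between(2)[where X=X and B=B and t=t] assms(1) by simp
      then have "\<not> 0 < kernel'' A (mix X B t)"
        using zero_less_kernel''_iff mix_in_interval[OF BX, of t] assms(2) by auto
      then show ?thesis
        by (intro mult_nonpos_nonpos) auto
    qed
    have "(sin (pi/4))\<^sup>2 = 1 / 2"
      by (simp add: sin_45 power_divide)
    then have "mix X B (pi/4) = (B + X) / 2"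
      unfolding mix_eq by (simp add: field_simps)
    then have "kernel'' A (mix X B (pi/4)) < 0"
      using kernel''_less_zero_iff mix_in_interval[OF BX, of "pi/4"] assms by auto
    then show "0 < - (2 * (sin (pi/4))\<^sup>2 * (cos (pi/4))\<^sup>2) * kernel'' A (mix X B (pi/4))"
      by (simp add: sin_45 cos_45 mult_neg_pos)
  qed auto
  then show ?thesis
    unfolding Q_def by simp
qed

lemma integral_kernel''_crossing_pos:
  assumes "B < X" "A < 4 * X"
  defines "\<sigma> \<equiv> (A / 4 - B) / (X - B)"
  shows "0 < integral {0..pi/2} (\<lambda>t. (sin t)\<^sup>2 * ((sin t)\<^sup>2 - \<sigma>) * kernel'' A (mix X B t))"
proof (rule integral_pos_if_continuous_nonneg)
  txt \<open>\<open>\<sigma>\<close> is the value of \<open>sin\<^sup>2 t\<close> at which \<open>mix X B t\<close> crosses \<open>A / 4\<close>.\<close>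
  have mix: "4 * mix X B t - A = 4 * (X - B) * ((sin t)\<^sup>2 - \<sigma>)" for t
    unfolding mix_eq \<sigma>_def using assms(1) by (simp add: field_simps)
  show "continuous_on {0..pi/2} (\<lambda>t. (sin t)\<^sup>2 * ((sin t)\<^sup>2 - \<sigma>) * kernel'' A (mix X B t))"
    using continuous_on_comp_mix[OF continuous_on_kernel'' BX]
    by (intro continuous_on_mult continuous_intros)
  show "0 \<le> (sin t)\<^sup>2 * ((sin t)\<^sup>2 - \<sigma>) * kernel'' A (mix X B t)" for t
  proof -
    define f where "f = kernel' A (mix X B t) / (2 * mix X B t * (A - mix X B t))"
    have "0 < f"
      unfolding f_def using kernel''_factor_pos mix_in_interval[OF BX, of t] by simp
    have "(sin t)\<^sup>2 * ((sin t)\<^sup>2 - \<sigma>) * kernel'' A (mix X B t)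
        = 4 * (X - B) * ((sin t)\<^sup>2 * ((sin t)\<^sup>2 - \<sigma>)\<^sup>2) * f"
      unfolding kernel''_eq mix f_def[symmetric] by (simp only: power2_eq_square mult_ac)
    with \<open>0 < f\<close> assms(1) show ?thesis
      by (metis diff_gt_0_iff_gt mult_nonneg_nonneg zero_le_mult_iff zero_le_numeral
          zero_le_power2 less_imp_le)
  qed
  have "\<sigma> < 1" "mix X B (pi/2) = X"
    using assms unfolding \<sigma>_def mix_eq by (simp_all add: field_simps)
  then show "0 < (sin (pi/2))\<^sup>2 * ((sin (pi/2))\<^sup>2 - \<sigma>) * kernel'' A (mix X B (pi/2))"
    using zero_less_kernel''_iff BX assms(2) by simp
qed auto

lemma J_XX_minus_J_BX_pos_if_Q_eq_0:
  assumes "4 * B < A" "A < 4 * X" and Q: "Q A X B = 0"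
  shows "0 < J_XX A X B - J_BX A X B"
proof -
  define \<sigma> where "\<sigma> = (A / 4 - B) / (X - B)"
  have "B < X"
    using assms by simp
  then have \<sigma>: "0 < \<sigma>" "\<sigma> < 1"
    using assms unfolding \<sigma>_def by (auto simp: field_simps)
  define v where "v t = (sin t)\<^sup>2 * ((sin t)\<^sup>2 - \<sigma>) * kernel'' A (mix X B t)" for t
  define q where "q t = 2 * (sin t)\<^sup>2 * (cos t)\<^sup>2 * kernel'' A (mix X B t)" for t
  have v_int: "v integrable_on {0..pi/2}" and q_int: "q integrable_on {0..pi/2}"
    unfolding v_def[abs_def] q_def[abs_def]
    by (auto intro!: integrable_weighted_mix continuous_on_kernel'' continuous_intros)
  have "0 < integral {0..pi/2} v"
    unfolding v_def \<sigma>_def using integral_kernel''_crossing_pos \<open>B < X\<close> assms(2) by blast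
  have "((\<lambda>t. (sin t)\<^sup>2 * (sin t)\<^sup>2 * kernel'' A (mix X B t)
      - (cos t)\<^sup>2 * (sin t)\<^sup>2 * kernel'' A (mix X B t))
      has_integral J_XX A X B - J_BX A X B) {0..pi/2}"
    unfolding J_XX_def J_BX_def
    by (intro has_integral_diff integrable_integral integrable_weighted_mix
        continuous_on_kernel'' continuous_intros)
  from has_integral_mult_right[OF this, of "2 * (1 - \<sigma>)"]
  have I1: "((\<lambda>t. 2 * v t - (1 - 2 * \<sigma>) * q t) has_integral
      2 * (1 - \<sigma>) * (J_XX A X B - J_BX A X B)) {0..pi/2}"
  proof (rule has_integral_eq[rotated])
    fix t :: real
    have cos2: "(cos t)\<^sup>2 = 1 - (sin t)\<^sup>2"
      by (simp add: cos_squared_eq)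
    show "2 * (1 - \<sigma>) * ((sin t)\<^sup>2 * (sin t)\<^sup>2 * kernel'' A (mix X B t)
        - (cos t)\<^sup>2 * (sin t)\<^sup>2 * kernel'' A (mix X B t)) = 2 * v t - (1 - 2 * \<sigma>) * q t"
      unfolding v_def q_def cos2 by (simp add: algebra_simps)
  qed
  have I2: "((\<lambda>t. 2 * v t - (1 - 2 * \<sigma>) * q t) has_integral
      2 * integral {0..pi/2} v - (1 - 2 * \<sigma>) * integral {0..pi/2} q) {0..pi/2}"
    using v_int q_int by (intro has_integral_diff has_integral_mult_right integrable_integral)
  have "integral {0..pi/2} q = 0"
    using Q unfolding Q_def q_def .
  with has_integral_unique[OF I1 I2]
  have "2 * (1 - \<sigma>) * (J_XX A X B - J_BX A X B) = 2 * integral {0..pi/2} v"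
    by simp
  with \<open>0 < integral {0..pi/2} v\<close> have "0 < 2 * (1 - \<sigma>) * (J_XX A X B - J_BX A X B)"
    by linarith
  then show ?thesis
    by (rule zero_less_mult_pos) (use \<sigma> in simp)
qed

end

lemma kernel''_bounded_below:
  assumes "0 < B" "4 * B < A"
  obtains M where "0 \<le> M" "\<And>x. B \<le> x \<Longrightarrow> x < A \<Longrightarrow> - M \<le> kernel'' A x"
proof -
  have "continuous_on {B..A/4} (kernel'' A)"
    by (rule continuous_on_subset[OF continuous_on_kernel'']) (use assms in auto)
  moreover have "{B..A/4} \<noteq> {}"
    using assms by simp
  ultimately obtain x0 where "\<forall>y \<in> {B..A/4}. kernel'' A x0 \<le> kernel'' A y"
    using continuous_attains_inf[OF compact_Icc] by blast
  then have x0: "\<And>y. y \<in> {B..A/4} \<Longrightarrow> kernel'' A x0 \<le> kernel'' A y"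
    by blast
  show ?thesis
  proof (rule that[of "max 0 (- kernel'' A x0)"])
    show "- max 0 (- kernel'' A x0) \<le> kernel'' A x" if "B \<le> x" "x < A" for x
    proof (cases "4 * x \<le> A")
      case True
      with x0[of x] that show ?thesis
        by auto
    next
      case False
      with that assms have "0 < kernel'' A x"
        by (subst zero_less_kernel''_iff) auto
      then show ?thesis
        by simp
    qed
  qed simp
qed

lemma kernel''_ge_near_A:
  assumes "0 < A" "A / 2 \<le> x" "x < A" "A - x \<le> d"
  shows "A * A / (2 * (A * sqrt A) * (d\<^sup>2 * sqrt d)) \<le> kernel'' A x"
  unfolding kernel''_def
proof (rule frac_le)
  show "0 \<le> A * (4 * x - A)" "A * A \<le> A * (4 * x - A)"
    using assms by (simp_all add: mult_left_mono)
  show "0 < 2 * x * sqrt x * (A - x)\<^sup>2 * sqrt (A - x)"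
    using assms by simp
  have "x * sqrt x \<le> A * sqrt A" "(A - x)\<^sup>2 * sqrt (A - x) \<le> d\<^sup>2 * sqrt d"
    using assms by (intro mult_mono power_mono real_sqrt_le_mono; simp)+
  then show "2 * x * sqrt x * (A - x)\<^sup>2 * sqrt (A - x) \<le> 2 * (A * sqrt A) * (d\<^sup>2 * sqrt d)"
    using assms by (simp add: mult.assoc mult_mono)
qed

lemma Q_ge_window_bound:
  assumes BX: "0 < B" "B < X" "X < A"
    and M: "0 \<le> M" "\<And>x. B \<le> x \<Longrightarrow> x < A \<Longrightarrow> - M \<le> kernel'' A x"
    and window: "0 \<le> s" "s \<le> s'" "s' \<le> pi/2"
      "\<And>t. t \<in> {s..s'} \<Longrightarrow> h \<le> 2 * (sin t)\<^sup>2 * (cos t)\<^sup>2 * kernel'' A (mix X B t)"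
  shows "(s' - s) * h - pi * M \<le> Q A X B"
proof -
  define q where "q t = 2 * (sin t)\<^sup>2 * (cos t)\<^sup>2 * kernel'' A (mix X B t)" for t
  have "- (2 * M) \<le> q t" for t
  proof -
    define w where "w = 2 * (sin t)\<^sup>2 * (cos t)\<^sup>2"
    have "(sin t)\<^sup>2 * (cos t)\<^sup>2 \<le> 1 * 1"
      by (intro mult_mono) (auto simp: abs_square_le_1)
    then have w: "0 \<le> w" "w \<le> 2"
      unfolding w_def by auto
    have "B \<le> mix X B t" "mix X B t < A"
      using mix_between[where X=X and B=B and t=t] mix_in_interval[of B A X t] BX by auto
    then have "w * - M \<le> w * kernel'' A (mix X B t)"
      using M(2) w by (intro mult_left_mono) auto
    moreover have "- (2 * M) \<le> w * - M"
      using w M(1) by (simp add: mult_right_mono)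
    ultimately show ?thesis
      unfolding q_def w_def by linarith
  qed
  moreover have "q integrable_on {0..pi/2}"
    unfolding q_def[abs_def] using BX
    by (intro integrable_weighted_mix continuous_intros) (auto intro: continuous_on_kernel'')
  ultimately have "(s' - s) * h - (pi/2 - 0) * (2 * M) \<le> integral {0..pi/2} q"
    using window M(1) unfolding q_def
    by (intro integral_ge_if_bounded_below_on_window) auto
  then show ?thesis
    unfolding Q_def q_def by simp
qed

lemma Q_integrand_ge_near_A:
  fixes A B r t :: real
  defines "K \<equiv> 1 + 9 * A"
  defines "C \<equiv> A * A / (2 * (A * sqrt A) * (K\<^sup>2 * sqrt K))"
  assumes B: "0 < B" "B < A - r\<^sup>2" and r: "0 < r" "r \<le> 1/6" "r\<^sup>2 * K \<le> A / 2"
    and cos: "r \<le> cos t" "cos t \<le> 3 * r"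
  shows "C / r ^ 3 \<le> 2 * (sin t)\<^sup>2 * (cos t)\<^sup>2 * kernel'' A (mix (A - r\<^sup>2) B t)"
proof -
  define X where "X = A - r\<^sup>2"
  have "0 \<le> r\<^sup>2"
    by simp
  then have "0 < A"
    using B by linarith
  then have "0 < K"
    unfolding K_def by simp
  have c2: "r\<^sup>2 \<le> (cos t)\<^sup>2" "(cos t)\<^sup>2 \<le> 9 * r\<^sup>2"
    using cos power_mono[of r "cos t" 2] power_mono[of "cos t" "3 * r" 2] r
    by (auto simp: power_mult_distrib)
  have "9 * r\<^sup>2 \<le> 9 * (1/6)\<^sup>2"
    using r by (intro mult_left_mono power_mono) auto
  then have "(cos t)\<^sup>2 \<le> 1/4"
    using c2(2) by (simp add: power_divide)
  then have s2: "1/2 \<le> (sin t)\<^sup>2"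
    using sin_squared_eq[of t] by linarith
  have "A - mix X B t = r\<^sup>2 + (X - B) * (cos t)\<^sup>2"
    unfolding mix_eq X_def by (simp add: sin_squared_eq algebra_simps)
  also have "\<dots> \<le> r\<^sup>2 + A * (9 * r\<^sup>2)"
    using B c2 \<open>0 < A\<close> unfolding X_def by (intro add_left_mono mult_mono) auto
  also have "\<dots> = r\<^sup>2 * K"
    unfolding K_def by (simp add: algebra_simps)
  finally have near: "A - mix X B t \<le> r\<^sup>2 * K" .
  have "mix X B t < A"
    using mix_in_interval[of B A X t] B r \<open>0 \<le> r\<^sup>2\<close> unfolding X_def by auto
  with near r(3) have "C / r ^ 5 \<le> kernel'' A (mix X B t)"
    using kernel''_ge_near_A[OF \<open>0 < A\<close> _ _ near] \<open>0 < r\<close> \<open>0 < K\<close>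
    by (simp add: C_def real_sqrt_mult power_mult_distrib mult_ac numeral_eq_Suc)
  have "C / r ^ 3 = 2 * (1/2) * r\<^sup>2 * (C / r ^ 5)"
    using \<open>0 < r\<close> by (simp add: field_simps numeral_eq_Suc)
  also have "\<dots> \<le> 2 * (sin t)\<^sup>2 * (cos t)\<^sup>2 * kernel'' A (mix X B t)"
    using s2 c2 \<open>C / r ^ 5 \<le> kernel'' A (mix X B t)\<close> \<open>0 < A\<close> \<open>0 < K\<close> \<open>0 < r\<close>
    unfolding C_def by (intro mult_mono mult_left_mono) auto
  finally show ?thesis
    unfolding X_def .
qed

lemma arccos_window:
  assumes "0 < r" "r \<le> 1/2"
  shows "0 \<le> arccos (2 * r)" "arccos (2 * r) + r \<le> pi/2"
    and "\<And>t. arccos (2 * r) \<le> t \<Longrightarrow> t \<le> arccos (2 * r) + r \<Longrightarrow> r \<le> cos t \<and> cos t \<le> 3 * r"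
proof -
  define t0 where "t0 = arccos (2 * r)"
  have t0: "0 \<le> t0" "t0 \<le> pi/2" "cos t0 = 2 * r"
    unfolding t0_def using arccos_lbound[of "2 * r"] arccos_le_pi2[of "2 * r"] assms by auto
  show window: "r \<le> cos t \<and> cos t \<le> 3 * r" if "arccos (2 * r) \<le> t" "t \<le> arccos (2 * r) + r" for t
    using abs_cos_diff_le[of t t0] that t0 unfolding t0_def by auto
  show "0 \<le> arccos (2 * r)"
    using t0 unfolding t0_def by simp
  show "arccos (2 * r) + r \<le> pi/2"
  proof (rule ccontr)
    assume "\<not> arccos (2 * r) + r \<le> pi/2"
    then show False
      using window[of "pi/2"] t0 assms unfolding t0_def by auto
  qed
qed

lemma Q_pos_near_A:
  assumes "0 < B" "4 * B < A"
  obtains X where "B < X" "X < A" "0 < Q A X B"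
proof -
  obtain M where M: "0 \<le> M" "\<And>x. B \<le> x \<Longrightarrow> x < A \<Longrightarrow> - M \<le> kernel'' A x"
    using kernel''_bounded_below[OF assms] by blast
  define K where "K = 1 + 9 * A"
  define C where "C = A * A / (2 * (A * sqrt A) * (K\<^sup>2 * sqrt K))"
  have "0 < A" "0 < K" "0 < C" "0 < M * pi + 1"
    using assms M(1) unfolding K_def C_def by (auto intro: add_nonneg_pos)
  define \<rho> where "\<rho> = min (min ((A - B) / 2) (A / (2 * K))) (C / (M * pi + 1))"
  define r where "r = min (1/6) (sqrt \<rho>)"
  have "0 < \<rho>"
    unfolding \<rho>_def using assms \<open>0 < K\<close> \<open>0 < C\<close> \<open>0 < M * pi + 1\<close> by auto
  then have r: "0 < r" "r \<le> 1/6" "r\<^sup>2 \<le> \<rho>"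
    unfolding r_def using real_sqrt_pow2[of \<rho>] power_mono[of r "sqrt \<rho>" 2] by (auto simp: r_def)
  then have small: "r\<^sup>2 < A - B" "r\<^sup>2 * K \<le> A / 2" "r\<^sup>2 * (M * pi + 1) \<le> C"
    unfolding \<rho>_def using assms \<open>0 < K\<close> \<open>0 < M * pi + 1\<close> by (auto simp: field_simps)
  txt \<open>On the window \<open>[t0, t0 + r]\<close>, where \<open>cos t \<approx> 2r\<close>, the integrand of \<open>Q A (A - r\<^sup>2) B\<close> is
    at least \<open>C / r\<^sup>3\<close>; elsewhere it is at least \<open>-2M\<close>.\<close>
  define X where "X = A - r\<^sup>2"
  define t0 where "t0 = arccos (2 * r)"
  have "C / r ^ 3 \<le> 2 * (sin t)\<^sup>2 * (cos t)\<^sup>2 * kernel'' A (mix X B t)" if "t \<in> {t0..t0 + r}" for t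
    unfolding C_def K_def X_def
    by (rule Q_integrand_ge_near_A)
      (use assms small r arccos_window(3)[of r t] that in \<open>auto simp: K_def t0_def\<close>)
  then have "(t0 + r - t0) * (C / r ^ 3) - pi * M \<le> Q A X B"
    using assms small r arccos_window(1,2)[of r] M unfolding X_def t0_def
    by (intro Q_ge_window_bound) auto
  moreover have "(t0 + r - t0) * (C / r ^ 3) = C / r\<^sup>2"
    using r by (simp add: power2_eq_square power3_eq_cube)
  moreover have "pi * M < C / r\<^sup>2"
  proof -
    have "0 < r\<^sup>2"
      using r by simp
    moreover have "r\<^sup>2 * (M * pi + 1) = pi * M * r\<^sup>2 + r\<^sup>2"
      by (simp add: algebra_simps)
    ultimately show ?thesis
      unfolding pos_less_divide_eq[OF \<open>0 < r\<^sup>2\<close>] using small(3) by linarith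
  qed
  ultimately show ?thesis
    using that[of X] small(1) r unfolding X_def by auto
qed

lemma J_X_minus_J_B_unique_zero:
  assumes "0 < B" "4 * B < A"
  obtains X where "B < X" "X < A" "J_X A X B - J_B A X B = 0"
    "((\<lambda>X. J_X A X B - J_B A X B) has_real_derivative J_XX A X B - J_BX A X B) (at X)"
    "0 < J_XX A X B - J_BX A X B"
    "\<And>Y. X < Y \<Longrightarrow> Y < A \<Longrightarrow> 0 < J_X A Y B - J_B A Y B"
    "\<And>Y. B < Y \<Longrightarrow> Y < X \<Longrightarrow> J_X A Y B - J_B A Y B < 0"
proof -
  have BX: "0 < B" "B < A" "0 < X" "X < A" if "B < X" "X < A" for X
    using that assms by auto
  have der: "((\<lambda>X. J_X A X B - J_B A X B) has_real_derivative J_XX A X B - J_BX A X B) (at X)"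
    if "B < X" "X < A" for X
    using has_real_derivative_J_X_X[OF BX[OF that]] has_real_derivative_J_B_X[OF BX[OF that]]
    by (rule DERIV_diff)
  have sign: "0 < J_X A X B - J_B A X B \<longleftrightarrow> 0 < Q A X B" "J_X A X B - J_B A X B < 0 \<longleftrightarrow> Q A X B < 0"
    if "B < X" "X < A" for X
    using J_X_minus_J_B[OF BX[OF that]] that by (simp_all add: zero_less_mult_iff mult_less_0_iff)
  have A_lt_4X_if_Q_nonneg: "A < 4 * X" if "B < X" "X < A" "0 \<le> Q A X B" for X
    using Q_neg[OF BX[OF that(1,2)] that(1)] that(3) by fastforce
  have up: "0 < J_XX A X B - J_BX A X B" if "B < X" "X < A" "J_X A X B - J_B A X B = 0" for X
  proof -
    have "Q A X B = 0"
      using J_X_minus_J_B[OF BX[OF that(1,2)]] that by simp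
    with that A_lt_4X_if_Q_nonneg[of X] show ?thesis
      by (intro J_XX_minus_J_BX_pos_if_Q_eq_0[OF BX[OF that(1,2)]] assms(2)) auto
  qed
  define x0 where "x0 = (B + A / 4) / 2"
  have x0: "B < x0" "x0 < A" "4 * x0 \<le> A"
    using assms unfolding x0_def by auto
  then have x0_neg: "J_X A x0 B - J_B A x0 B < 0"
    using sign(2)[OF x0(1,2)] Q_neg[OF BX[OF x0(1,2)] x0(1,3)] by simp
  obtain x1 where x1: "B < x1" "x1 < A" "0 < Q A x1 B"
    using Q_pos_near_A[OF assms] by blast
  have "x0 \<le> x1"
    using A_lt_4X_if_Q_nonneg[OF x1(1,2)] x1 unfolding x0_def by simp
  have x1_pos: "0 < J_X A x1 B - J_B A x1 B"
    using sign(1)[OF x1(1,2)] x1(3) by simp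
  obtain X where X: "B < X" "X < A" "J_X A X B - J_B A X B = 0"
    and right: "\<And>Y. X < Y \<Longrightarrow> Y < A \<Longrightarrow> 0 < J_X A Y B - J_B A Y B"
    and left: "\<And>Y. B < Y \<Longrightarrow> Y < X \<Longrightarrow> J_X A Y B - J_B A Y B < 0"
    using upcrossing_zero_unique[OF der up x0(1) \<open>x0 \<le> x1\<close> x1(2) x0_neg x1_pos] by blast
  show ?thesis
    by (rule that[OF X der[OF X(1,2)] up[OF X] right left])
qed

section \<open>Back to the original variables\<close>

lemma bij_betw_sin_squared_affine:
  assumes "b < u"
  shows "bij_betw (\<lambda>t. b + (u - b) * (sin t)\<^sup>2) {0<..<pi/2} {b<..<u}"
proof (rule bij_betw_imageI)
  show "inj_on (\<lambda>t. b + (u - b) * (sin t)\<^sup>2) {0<..<pi/2}"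
  proof (rule inj_onI)
    fix x y :: real
    assume "x \<in> {0<..<pi/2}" "y \<in> {0<..<pi/2}" "b + (u - b) * (sin x)\<^sup>2 = b + (u - b) * (sin y)\<^sup>2"
    moreover from this have "0 < sin x" "0 < sin y"
      by (auto intro!: sin_gt_zero)
    ultimately have "sin x = sin y"
      using assms by (simp add: power2_eq_iff)
    then have "arcsin (sin x) = arcsin (sin y)"
      by simp
    with \<open>x \<in> {0<..<pi/2}\<close> \<open>y \<in> {0<..<pi/2}\<close> show "x = y"
      by (simp add: arcsin_sin)
  qed
  show "(\<lambda>t. b + (u - b) * (sin t)\<^sup>2) ` {0<..<pi/2} = {b<..<u}"
  proof safe
    fix t :: real
    assume "t \<in> {0<..<pi/2}"
    then have "0 < sin t" "0 < cos t"
      by (auto intro!: sin_gt_zero cos_gt_zero)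
    then have "0 < (sin t)\<^sup>2" "0 < (cos t)\<^sup>2"
      by simp_all
    then have "0 < (sin t)\<^sup>2" "(sin t)\<^sup>2 < 1"
      using sin_squared_eq[of t] by linarith+
    have "b + (u - b) * (sin t)\<^sup>2 < b + (u - b) * 1"
      using assms \<open>(sin t)\<^sup>2 < 1\<close> by (intro add_strict_left_mono mult_strict_left_mono) auto
    moreover have "b < b + (u - b) * (sin t)\<^sup>2"
      using assms \<open>0 < (sin t)\<^sup>2\<close> by simp
    ultimately show "b + (u - b) * (sin t)\<^sup>2 \<in> {b<..<u}"
      by simp
  next
    fix y
    assume y: "y \<in> {b<..<u}"
    define r where "r = (y - b) / (u - b)"
    have r: "0 < sqrt r" "sqrt r < 1"
      using y assms unfolding r_def by (auto simp: field_simps)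
    define t where "t = arcsin (sqrt r)"
    have "arcsin 0 < t" "t < arcsin 1"
      unfolding t_def using r by (subst arcsin_less_mono; simp)+
    moreover have "sin t = sqrt r"
      unfolding t_def using r by (intro sin_arcsin) linarith+
    then have "y = b + (u - b) * (sin t)\<^sup>2"
      using r assms unfolding r_def by simp
    ultimately show "y \<in> (\<lambda>t. b + (u - b) * (sin t)\<^sup>2) ` {0<..<pi/2}"
      by auto
  qed
qed

lemma Iint_integrand_substitution:
  fixes \<nu> a b u t :: real
  defines "\<eta> \<equiv> b + (u - b) * (sin t)\<^sup>2"
  assumes "0 < b + \<nu>" "b < u" "u < a" "0 < t" "t < pi/2"
  shows "\<bar>(u - b) * (2 * sin t * cos t)\<bar> *
      ((\<eta> + \<nu>) / sqrt ((\<eta> + \<nu>) * (a - \<eta>) * (u - \<eta>) * (\<eta> - b)))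
    = kernel (a + \<nu>) (mix (u + \<nu>) (b + \<nu>) t)"
proof -
  define s c where "s = sin t" and "c = cos t"
  have "0 < s" "0 < c"
    unfolding s_def c_def using assms by (auto intro!: sin_gt_zero cos_gt_zero)
  define p q where "p = \<eta> + \<nu>" and "q = a - \<eta>"
  have "t \<in> {0<..<pi/2}"
    using assms by simp
  then have "\<eta> \<in> {b<..<u}"
    using bij_betw_imp_surj_on[OF bij_betw_sin_squared_affine[OF \<open>b < u\<close>]]
    unfolding \<eta>_def by (metis imageI)
  then have "0 < p" "0 < q"
    unfolding p_def q_def using assms by auto
  have u\<eta>: "u - \<eta> = (u - b) * c\<^sup>2" and \<eta>b: "\<eta> - b = (u - b) * s\<^sup>2"
    unfolding \<eta>_def s_def c_def cos_squared_eq by (simp_all add: algebra_simps)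
  have "p * q * (u - \<eta>) * (\<eta> - b) = (sqrt p * sqrt q * (u - b) * s * c)\<^sup>2"
    unfolding u\<eta> \<eta>b using \<open>0 < p\<close> \<open>0 < q\<close>
    by (simp add: power_mult_distrib power2_eq_square algebra_simps)
  then have "sqrt (p * q * (u - \<eta>) * (\<eta> - b)) = sqrt ((sqrt p * sqrt q * (u - b) * s * c)\<^sup>2)"
    by simp
  also have "\<dots> = sqrt p * sqrt q * (u - b) * s * c"
    using \<open>0 < p\<close> \<open>0 < q\<close> \<open>0 < s\<close> \<open>0 < c\<close> assms by simp
  finally have sq: "sqrt (p * q * (u - \<eta>) * (\<eta> - b)) = sqrt p * sqrt q * (u - b) * s * c" .
  have cancel: "d * (2 * s * c) * (x * x / (x * y * d * s * c)) = 2 * x / y"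
    if "0 < d" "0 < x" "0 < y" for d x y
    using that \<open>0 < s\<close> \<open>0 < c\<close> by (simp add: field_simps)
  have "\<bar>(u - b) * (2 * s * c)\<bar> * (p / sqrt (p * q * (u - \<eta>) * (\<eta> - b))) = 2 * sqrt p / sqrt q"
    unfolding sq using cancel[of "u - b" "sqrt p" "sqrt q"] \<open>0 < p\<close> \<open>0 < q\<close> \<open>0 < s\<close> \<open>0 < c\<close> \<open>b < u\<close>
    by simp
  moreover have "mix (u + \<nu>) (b + \<nu>) t = p" "a + \<nu> - p = q"
    unfolding mix_eq p_def q_def \<eta>_def by (simp_all add: algebra_simps)
  ultimately show ?thesis
    unfolding kernel_def s_def c_def p_def q_def by simp
qed

lemma Iint_eq_J:
  assumes "0 < b + \<nu>" "b < u" "u < a"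
  shows "Iint \<nu> a u b = J (a + \<nu>) (u + \<nu>) (b + \<nu>)"
proof -
  define g g' where "g t = b + (u - b) * (sin t)\<^sup>2" and "g' t = (u - b) * (2 * sin t * cos t)" for t
  define f where "f \<eta> = (\<eta> + \<nu>) / sqrt ((\<eta> + \<nu>) * (a - \<eta>) * (u - \<eta>) * (\<eta> - b))" for \<eta>
  define h where "h t = kernel (a + \<nu>) (mix (u + \<nu>) (b + \<nu>) t)" for t
  let ?S = "{0<..<pi/2::real}"
  have eq: "\<bar>g' t\<bar> * f (g t) = h t" if "t \<in> ?S" for t
    using Iint_integrand_substitution[of b \<nu> u a t] assms that
    unfolding g_def g'_def f_def h_def by auto
  have "continuous_on {0..pi/2} h"
    unfolding h_def[abs_def] using assms
    by (intro continuous_on_comp_mix[where A = "a + \<nu>"] continuous_on_kernel) auto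
  then have "h absolutely_integrable_on {0..pi/2}"
    by (rule absolutely_integrable_continuous_real)
  then have "h absolutely_integrable_on ?S"
    using absolutely_integrable_on_open_interval[where f = h and a = 0 and b = "pi/2"] by simp
  then have "(\<lambda>t. \<bar>g' t\<bar> * f (g t)) absolutely_integrable_on ?S"
    by (rule absolutely_integrable_spike[OF _ negligible_empty]) (use eq in auto)
  moreover have "integral ?S (\<lambda>t. \<bar>g' t\<bar> * f (g t)) = integral ?S h"
    by (rule integral_cong) (use eq in blast)
  then have "integral ?S (\<lambda>t. \<bar>g' t\<bar> * f (g t)) = J (a + \<nu>) (u + \<nu>) (b + \<nu>)"
    unfolding J_def h_def[symmetric] by (simp add: integral_open_interval_real)
  moreover have "(g has_field_derivative g' t) (at t within ?S)" for t
    unfolding g_def[abs_def] g'_def by (auto intro!: derivative_eq_intros simp: power2_eq_square)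
  ultimately have "integral (g ` ?S) f = J (a + \<nu>) (u + \<nu>) (b + \<nu>)"
    using has_absolute_integral_change_of_variables_1'[of ?S g g' f]
      bij_betw_imp_inj_on[OF bij_betw_sin_squared_affine[OF assms(2)]]
    unfolding g_def[abs_def] by auto
  then show ?thesis
    unfolding Iint_def f_def g_def bij_betw_imp_surj_on[OF bij_betw_sin_squared_affine[OF assms(2)]]
    by (simp add: integral_open_interval_real)
qed

lemma dI_2_eq_J_X:
  assumes "0 < b + \<nu>" "b < u" "u < a"
  shows "dI 2 \<nu> a u b = J_X (a + \<nu>) (u + \<nu>) (b + \<nu>)"
proof -
  have "((\<lambda>x. J (a + \<nu>) (x + \<nu>) (b + \<nu>)) has_real_derivative J_X (a + \<nu>) (u + \<nu>) (b + \<nu>)) (at u)"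
    using has_real_derivative_J_X[of "b + \<nu>" "a + \<nu>" "u + \<nu>"] assms by (simp add: DERIV_shift)
  then have "((\<lambda>x. Iint \<nu> a x b) has_real_derivative J_X (a + \<nu>) (u + \<nu>) (b + \<nu>)) (at u)"
    by (rule has_field_derivative_transform_within_open[where S = "{b<..<a}"])
      (use assms in \<open>auto simp: Iint_eq_J\<close>)
  then show ?thesis
    unfolding dI_def by (simp add: DERIV_imp_deriv)
qed

lemma dI_3_eq_J_B:
  assumes "0 < b + \<nu>" "b < u" "u < a"
  shows "dI 3 \<nu> a u b = J_B (a + \<nu>) (u + \<nu>) (b + \<nu>)"
proof -
  have "((\<lambda>x. J (a + \<nu>) (u + \<nu>) (x + \<nu>)) has_real_derivative J_B (a + \<nu>) (u + \<nu>) (b + \<nu>)) (at b)"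
    using has_real_derivative_J_B[of "b + \<nu>" "a + \<nu>" "u + \<nu>"] assms by (simp add: DERIV_shift)
  then have "((\<lambda>x. Iint \<nu> a u x) has_real_derivative J_B (a + \<nu>) (u + \<nu>) (b + \<nu>)) (at b)"
    by (rule has_field_derivative_transform_within_open[where S = "{- \<nu><..<u}"])
      (use assms in \<open>auto simp: Iint_eq_J\<close>)
  then show ?thesis
    unfolding dI_def by (simp add: DERIV_imp_deriv)
qed

lemma lam_2_minus_lam_3_eq:
  assumes "0 < b + \<nu>" "b < u" "u < a"
  defines "A \<equiv> a + \<nu>" and "X \<equiv> u + \<nu>" and "B \<equiv> b + \<nu>"
  shows "lam 2 \<nu> a u b - lam 3 \<nu> a u b
    = J A X B / (J_X A X B * J_B A X B) * (J_X A X B - J_B A X B)"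
proof -
  have "0 < J_X A X B" "0 < J_B A X B"
    using J_X_pos[of B A X] J_B_pos[of B A X] assms by auto
  then show ?thesis
    unfolding lam_def Iint_eq_J[OF assms(1-3)] dI_2_eq_J_X[OF assms(1-3)] dI_3_eq_J_B[OF assms(1-3)]
      A_def[symmetric] X_def[symmetric] B_def[symmetric]
    by (simp add: field_simps)
qed

lemma isCont_J_div_J_X_J_B:
  assumes "0 < B" "B < A" "0 < X" "X < A"
  shows "isCont (\<lambda>X. J A X B / (J_X A X B * J_B A X B)) X"
  using DERIV_isCont[OF has_real_derivative_J_X[OF assms]]
    DERIV_isCont[OF has_real_derivative_J_X_X[OF assms]]
    DERIV_isCont[OF has_real_derivative_J_B_X[OF assms]] J_X_pos[OF assms] J_B_pos[OF assms]
  by (intro continuous_intros) auto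

theorem lemma4p4:
  fixes \<nu> a b :: real
  assumes "0 < b + \<nu>" and "b + \<nu> < (a + \<nu>) / 4"
  shows "\<exists>ustar. b < ustar \<and> ustar < a
     \<and> lam 2 \<nu> a ustar b - lam 3 \<nu> a ustar b = 0
     \<and> (\<forall>u. b < u \<and> u < a \<and> lam 2 \<nu> a u b - lam 3 \<nu> a u b = 0 \<longrightarrow> u = ustar)
     \<and> (\<exists>D. ((\<lambda>u. lam 2 \<nu> a u b - lam 3 \<nu> a u b) has_real_derivative D) (at ustar) \<and> D \<noteq> 0)
     \<and> (\<forall>u. ustar < u \<and> u < a \<longrightarrow> lam 2 \<nu> a u b - lam 3 \<nu> a u b > 0)
     \<and> (\<forall>u. b < u \<and> u < ustar \<longrightarrow> lam 2 \<nu> a u b - lam 3 \<nu> a u b < 0)"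
proof -
  define A B where "A = a + \<nu>" and "B = b + \<nu>"
  have "0 < B" "4 * B < A"
    using assms unfolding A_def B_def by auto
  obtain X where X: "B < X" "X < A" "J_X A X B - J_B A X B = 0"
    and D: "((\<lambda>X. J_X A X B - J_B A X B) has_real_derivative J_XX A X B - J_BX A X B) (at X)"
      "0 < J_XX A X B - J_BX A X B"
    and sign: "\<And>Y. X < Y \<Longrightarrow> Y < A \<Longrightarrow> 0 < J_X A Y B - J_B A Y B"
      "\<And>Y. B < Y \<Longrightarrow> Y < X \<Longrightarrow> J_X A Y B - J_B A Y B < 0"
    using J_X_minus_J_B_unique_zero[OF \<open>0 < B\<close> \<open>4 * B < A\<close>] by blast
  define c where "c u = J A (u + \<nu>) B / (J_X A (u + \<nu>) B * J_B A (u + \<nu>) B)" for u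
  show ?thesis
  proof (rule sign_change_of_positive_multiple
      [where c = c and f = "\<lambda>u. J_X A (u + \<nu>) B - J_B A (u + \<nu>) B"])
    show "lam 2 \<nu> a u b - lam 3 \<nu> a u b = c u * (J_X A (u + \<nu>) B - J_B A (u + \<nu>) B)"
      "0 < c u" if "b < u" "u < a" for u
      using lam_2_minus_lam_3_eq[OF assms(1) that] J_pos J_X_pos J_B_pos \<open>0 < B\<close> that
      unfolding c_def A_def B_def by (auto simp: add.commute)
    show "isCont c (X - \<nu>)"
      unfolding c_def using X \<open>0 < B\<close> by (intro isCont_o2[OF _ isCont_J_div_J_X_J_B]) auto
    show "((\<lambda>u. J_X A (u + \<nu>) B - J_B A (u + \<nu>) B) has_real_derivative J_XX A X B - J_BX A X B)
        (at (X - \<nu>))"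
      using DERIV_shift[of "\<lambda>X. J_X A X B - J_B A X B" _ "X - \<nu>" \<nu>] D(1) by simp
  qed (use X D(2) sign in \<open>auto simp: A_def B_def\<close>)
qed

end
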